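(* Let $n\ge0$. If $\Lambda\in\widetilde{\mathrm{NC}}^{\mathrm B}(n)$ has $2k+1$ blocks, then $\Lambda^+\in\widetilde{\mathrm{NC}}^{\mathrm B}(n)$ and $\Lambda^+$ has $2(n-k)+1$ blocks.
   Context: A set partition of a finite set $\mathcal X\subset\mathbb Z$ is a set of nonempty pairwise disjoint sets (blocks) with union $\mathcal X$. A pair $(i,j)$ is an arc of $\Lambda$ if $i<j$ lie in the same block and $j$ is the least element of that block greater than $i$; $\mathrm{Arc}(\Lambda)$ is the set of arcs (which with $\mathcal X$ determines $\Lambda$). Let $[\pm n]=\{\pm1,\dots,\pm n\}$. $\Pi^{\mathrm B}(n)$ is the set of partitions $\Lambda$ of $\{0\}\cup[\pm n]$ such that $(i,j)\in\mathrm{Arc}(\Lambda)$ iff $(-j,-i)\in\mathrm{Arc}(\Lambda)$. $\widetilde{\mathrm{NC}}^{\mathrm B}(n)$ is the set of $\Lambda\in\Pi^{\mathrm B}(n)$ such that whenever $(i,k),(j,l)\in\mathrm{Arc}(\Lambda)$ with $i<j<k<l$, we have $(i,k)=(-l,-j)$. For a partition $\Lambda$ of $\mathcal X$, $\Lambda^+$ is the partition of $\mathcal X$ with arc set $(\mathrm{Arc}(\Lambda)\setminus\mathcal S)\cup\mathcal T$, where $\mathcal S=\{(i,i+1):i\in\mathbb Z\}$ and $\mathcal T$ is the set of pairs $(i,i+1)\in\mathcal X\times\mathcal X$ with $i$ maximal in its block of $\Lambda$ and $i+1$ minimal in its block of $\Lambda$. *)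

theory Defs
  imports Main
begin

definition set_partition :: "int set \<Rightarrow> int set set \<Rightarrow> bool" where
  "set_partition X P \<longleftrightarrow> (\<forall>B\<in>P. B \<noteq> {}) \<and>
     (\<forall>B\<in>P. \<forall>C\<in>P. B \<noteq> C \<longrightarrow> B \<inter> C = {}) \<and> \<Union>P = X"

definition Arc :: "int set set \<Rightarrow> (int \<times> int) set" where
  "Arc P = {(i, j). \<exists>B\<in>P. i \<in> B \<and> j \<in> B \<and> i < j \<and> (\<forall>m\<in>B. i < m \<longrightarrow> j \<le> m)}"

text \<open>The partition of X whose blocks are the connected components of the graph with edge set A
  (restricted to X). If A is the arc set of some partition of X, this is that partition.\<close>
definition partition_of_arcs :: "int set \<Rightarrow> (int \<times> int) set \<Rightarrow> int set set" where
  "partition_of_arcs X A =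
     X // ((((A \<inter> (X \<times> X)) \<union> (A \<inter> (X \<times> X))\<inverse>)\<^sup>*) \<inter> (X \<times> X))"

definition pm :: "nat \<Rightarrow> int set" where
  "pm n = {i. 1 \<le> \<bar>i\<bar> \<and> \<bar>i\<bar> \<le> int n}"

definition PiB :: "nat \<Rightarrow> int set set set" where
  "PiB n = {L. set_partition ({0} \<union> pm n) L \<and>
              (\<forall>i j. (i, j) \<in> Arc L \<longleftrightarrow> (- j, - i) \<in> Arc L)}"

definition NCB :: "nat \<Rightarrow> int set set set" where
  "NCB n = {L \<in> PiB n. \<forall>i j k l. (i, k) \<in> Arc L \<and> (j, l) \<in> Arc L \<and> i < j \<and> j < k \<and> k < l
              \<longrightarrow> (i, k) = (- l, - j)}"

definition Splus :: "(int \<times> int) set" where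
  "Splus = {(i, i + 1) | i. True}"

definition Tplus :: "int set \<Rightarrow> int set set \<Rightarrow> (int \<times> int) set" where
  "Tplus X L = {(i, i + 1) | i. i \<in> X \<and> i + 1 \<in> X \<and>
      (\<exists>B\<in>L. i \<in> B \<and> (\<forall>m\<in>B. m \<le> i)) \<and> (\<exists>B\<in>L. i + 1 \<in> B \<and> (\<forall>m\<in>B. i + 1 \<le> m))}"

definition plus_op :: "int set \<Rightarrow> int set set \<Rightarrow> int set set" where
  "plus_op X L = partition_of_arcs X ((Arc L - Splus) \<union> Tplus X L)"

end

theory Submission
  imports Defs
begin

(*
  Lambda-plus deletes the arcs (i, i+1) of Lambda and adds (i, i+1) whenever i is the maximum of
  its block and i+1 the minimum of its block. The new arc set is still increasing and injective
  in both directions, so it is exactly the arc set of the partition it generates. Reflection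
  i \<mapsto> -i exchanges block maxima and minima, so symmetry is preserved, and the added arcs have
  length one, so they cannot take part in a crossing.

  For the count, a partition of X has card X - card (Arc Lambda) blocks. In a symmetric
  noncrossing partition, if i starts an arc and i+1 ends one, then (i, i+1) itself is an arc
  (otherwise the two arcs cross without being mirror images, which would force i+1 = -i).
  Inclusion-exclusion over the positions -n, ..., n-1 then gives
  card (Arc Lambda+) + card (Arc Lambda) = 2n.
*)

lemma set_partition_block_subset: "set_partition X P \<Longrightarrow> B \<in> P \<Longrightarrow> B \<subseteq> X"
  unfolding set_partition_def by blast

lemma set_partition_block_eq:
  "set_partition X P \<Longrightarrow> B \<in> P \<Longrightarrow> C \<in> P \<Longrightarrow> x \<in> B \<Longrightarrow> x \<in> C \<Longrightarrow> B = C"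
  unfolding set_partition_def by blast

lemma set_partition_block_exists: "set_partition X P \<Longrightarrow> x \<in> X \<Longrightarrow> \<exists>B\<in>P. x \<in> B"
  unfolding set_partition_def by blast

lemma set_partition_block_nonempty: "set_partition X P \<Longrightarrow> B \<in> P \<Longrightarrow> B \<noteq> {}"
  unfolding set_partition_def by blast

lemma finite_set_partition_block: "finite X \<Longrightarrow> set_partition X P \<Longrightarrow> B \<in> P \<Longrightarrow> finite B"
  by (rule finite_subset[OF set_partition_block_subset])

lemma set_partition_quotient: "equiv X r \<Longrightarrow> set_partition X (X // r)"
  unfolding set_partition_def
  using in_quotient_imp_non_empty quotient_disj Union_quotient by metis

lemma Arc_less: "(i, j) \<in> Arc P \<Longrightarrow> i < j"
  unfolding Arc_def by auto

lemma Arc_subset: "set_partition X P \<Longrightarrow> Arc P \<subseteq> X \<times> X"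
  unfolding Arc_def using set_partition_block_subset by blast

lemma Arc_same_block:
  assumes "set_partition X P" "(i, j) \<in> Arc P" "B \<in> P"
  shows "i \<in> B \<longleftrightarrow> j \<in> B"
  using assms set_partition_block_eq unfolding Arc_def by blast

lemma Arc_least:
  assumes "set_partition X P" "(i, j) \<in> Arc P" "B \<in> P" "i \<in> B" "m \<in> B" "i < m"
  shows "j \<le> m"
  using assms set_partition_block_eq unfolding Arc_def by blast

lemma single_valued_Arc:
  assumes "set_partition X P"
  shows "single_valued (Arc P)"
proof (rule single_valuedI)
  fix i j j' assume arcs: "(i, j) \<in> Arc P" "(i, j') \<in> Arc P"
  obtain B where B: "B \<in> P" "i \<in> B"
    using arcs(1) unfolding Arc_def by blast
  have "j \<in> B" "j' \<in> B"
    using Arc_same_block[OF assms _ B(1)] arcs B(2) by blast+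
  then show "j = j'"
    using Arc_least[OF assms _ B] arcs Arc_less by (metis order.antisym)
qed

lemma single_valued_converse_Arc:
  assumes "set_partition X P"
  shows "single_valued ((Arc P)\<inverse>)"
proof (rule single_valuedI)
  fix i h h' assume "(i, h) \<in> (Arc P)\<inverse>" "(i, h') \<in> (Arc P)\<inverse>"
  then have arcs: "(h, i) \<in> Arc P" "(h', i) \<in> Arc P" by auto
  obtain B where B: "B \<in> P" "i \<in> B"
    using arcs(1) unfolding Arc_def by blast
  have "h \<in> B" "h' \<in> B"
    using Arc_same_block[OF assms _ B(1)] arcs B(2) by blast+
  then show "h = h'"
    using Arc_least[OF assms arcs(1) B(1)] Arc_least[OF assms arcs(2) B(1)] Arc_less[OF arcs(1)]
      Arc_less[OF arcs(2)] by (meson linorder_neqE not_le)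
qed

lemma Arc_successor_exists:
  assumes "finite X" "set_partition X P" "B \<in> P" "i \<in> B" "m \<in> B" "i < m"
  shows "i \<in> Domain (Arc P)"
proof -
  let ?C = "{m\<in>B. i < m}"
  have fin: "finite ?C" and "?C \<noteq> {}"
    using finite_set_partition_block[OF assms(1-3)] assms(5,6) by auto
  then have "Min ?C \<in> ?C" by (rule Min_in)
  moreover have "\<forall>m\<in>B. i < m \<longrightarrow> Min ?C \<le> m"
    using Min_le[OF fin] by blast
  ultimately have "(i, Min ?C) \<in> Arc P"
    unfolding Arc_def using assms(3,4) by blast
  then show ?thesis by blast
qed

lemma Arc_predecessor_exists:
  assumes "finite X" "set_partition X P" "B \<in> P" "i \<in> B" "m \<in> B" "m < i"
  shows "i \<in> Range (Arc P)"
proof -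
  let ?C = "{m\<in>B. m < i}"
  have fin: "finite ?C" and "?C \<noteq> {}"
    using finite_set_partition_block[OF assms(1-3)] assms(5,6) by auto
  then have "Max ?C \<in> ?C" by (rule Max_in)
  moreover have "\<forall>m\<in>B. Max ?C < m \<longrightarrow> i \<le> m"
    using Max_ge[OF fin] by (metis (no_types, lifting) mem_Collect_eq not_le)
  ultimately have "(Max ?C, i) \<in> Arc P"
    unfolding Arc_def using assms(3,4) by blast
  then show ?thesis by blast
qed

lemma block_maximum_iff_notin_Domain_Arc:
  assumes "finite X" "set_partition X P"
  shows "(\<exists>B\<in>P. i \<in> B \<and> (\<forall>m\<in>B. m \<le> i)) \<longleftrightarrow> i \<in> X \<and> i \<notin> Domain (Arc P)"
proof
  assume "\<exists>B\<in>P. i \<in> B \<and> (\<forall>m\<in>B. m \<le> i)"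
  then obtain B where B: "B \<in> P" "i \<in> B" "\<forall>m\<in>B. m \<le> i" by blast
  have "(i, j) \<notin> Arc P" for j
  proof
    assume ij: "(i, j) \<in> Arc P"
    then have "j \<in> B" using Arc_same_block[OF assms(2) ij B(1)] B(2) by blast
    then show False using B(3) Arc_less[OF ij] by fastforce
  qed
  then show "i \<in> X \<and> i \<notin> Domain (Arc P)"
    using set_partition_block_subset[OF assms(2) B(1)] B(2) by blast
next
  assume i: "i \<in> X \<and> i \<notin> Domain (Arc P)"
  then obtain B where "B \<in> P" "i \<in> B" using set_partition_block_exists[OF assms(2)] by blast
  then show "\<exists>B\<in>P. i \<in> B \<and> (\<forall>m\<in>B. m \<le> i)"
    using Arc_successor_exists[OF assms] i by (meson not_le)
qed

lemma block_minimum_iff_notin_Range_Arc: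
  assumes "finite X" "set_partition X P"
  shows "(\<exists>B\<in>P. i \<in> B \<and> (\<forall>m\<in>B. i \<le> m)) \<longleftrightarrow> i \<in> X \<and> i \<notin> Range (Arc P)"
proof
  assume "\<exists>B\<in>P. i \<in> B \<and> (\<forall>m\<in>B. i \<le> m)"
  then obtain B where B: "B \<in> P" "i \<in> B" "\<forall>m\<in>B. i \<le> m" by blast
  have "(h, i) \<notin> Arc P" for h
  proof
    assume hi: "(h, i) \<in> Arc P"
    then have "h \<in> B" using Arc_same_block[OF assms(2) hi B(1)] B(2) by blast
    then show False using B(3) Arc_less[OF hi] by fastforce
  qed
  then show "i \<in> X \<and> i \<notin> Range (Arc P)"
    using set_partition_block_subset[OF assms(2) B(1)] B(2) by blast
next
  assume i: "i \<in> X \<and> i \<notin> Range (Arc P)"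
  then obtain B where "B \<in> P" "i \<in> B" using set_partition_block_exists[OF assms(2)] by blast
  then show "\<exists>B\<in>P. i \<in> B \<and> (\<forall>m\<in>B. i \<le> m)"
    using Arc_predecessor_exists[OF assms] i by (meson not_le)
qed

lemma card_Domain_Arc:
  assumes "set_partition X P"
  shows "card (Domain (Arc P)) = card (Arc P)"
proof -
  have "inj_on fst (Arc P)"
  proof (rule inj_onI)
    fix p q assume "p \<in> Arc P" "q \<in> Arc P" "fst p = fst q"
    then show "p = q"
      using single_valuedD[OF single_valued_Arc[OF assms]] by (metis prod.collapse)
  qed
  then show ?thesis by (metis card_image fst_eq_Domain)
qed

lemma card_Range_Arc:
  assumes "set_partition X P"
  shows "card (Range (Arc P)) = card (Arc P)"
proof -
  have "inj_on snd (Arc P)"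
  proof (rule inj_onI)
    fix p q assume "p \<in> Arc P" "q \<in> Arc P" "snd p = snd q"
    then show "p = q"
      using single_valuedD[OF single_valued_converse_Arc[OF assms]] by (metis converse_iff prod.collapse)
  qed
  then show ?thesis by (metis card_image snd_eq_Range)
qed

lemma card_partition_plus_card_Arc:
  assumes "finite X" "set_partition X P"
  shows "card P + card (Arc P) = card X"
proof -
  have fin: "finite B" and ne: "B \<noteq> {}" if "B \<in> P" for B
    using finite_set_partition_block[OF assms that] set_partition_block_nonempty[OF assms(2) that]
    by auto
  have block_minimum_iff: "(\<exists>B\<in>P. i \<in> B \<and> (\<forall>m\<in>B. i \<le> m)) \<longleftrightarrow> i \<in> Min ` P" for i
  proof
    assume "\<exists>B\<in>P. i \<in> B \<and> (\<forall>m\<in>B. i \<le> m)"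
    then obtain B where B: "B \<in> P" "i \<in> B" "\<forall>m\<in>B. i \<le> m" by blast
    have "Min B = i" using Min_eqI[OF fin[OF B(1)]] B(2,3) by blast
    then show "i \<in> Min ` P" using B(1) by blast
  next
    assume "i \<in> Min ` P"
    then obtain B where B: "B \<in> P" "i = Min B" by blast
    then have "i \<in> B" "\<forall>m\<in>B. i \<le> m"
      using Min_in[OF fin ne] Min_le[OF fin] by auto
    then show "\<exists>B\<in>P. i \<in> B \<and> (\<forall>m\<in>B. i \<le> m)" using B(1) by blast
  qed
  have minima: "X - Range (Arc P) = Min ` P"
  proof (intro set_eqI)
    fix i show "i \<in> X - Range (Arc P) \<longleftrightarrow> i \<in> Min ` P"
      using block_minimum_iff_notin_Range_Arc[OF assms, of i] block_minimum_iff[of i] by simp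
  qed
  have "inj_on Min P"
  proof (rule inj_onI)
    fix B C assume "B \<in> P" "C \<in> P" "Min B = Min C"
    moreover have "Min B \<in> B" "Min C \<in> C"
      using Min_in[OF fin ne] \<open>B \<in> P\<close> \<open>C \<in> P\<close> by auto
    ultimately show "B = C" using set_partition_block_eq[OF assms(2)] by simp
  qed
  then have "card (X - Range (Arc P)) = card P"
    unfolding minima by (rule card_image)
  moreover have "Range (Arc P) \<subseteq> X"
    using Arc_subset[OF assms(2)] by blast
  then have "card (X - Range (Arc P)) = card X - card (Range (Arc P))"
    "card (Range (Arc P)) \<le> card X"
    using assms(1) by (auto simp: card_Diff_subset finite_subset card_mono)
  ultimately show ?thesis using card_Range_Arc[OF assms(2)] by linarith
qed

(* A functional and injective relation is a disjoint union of chains, so elements joined by an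
   undirected path lie on a common chain. *)
lemma rtrancl_symcl_imp_rtrancl_either:
  assumes "single_valued A" "single_valued (A\<inverse>)" "(x, y) \<in> (A \<union> A\<inverse>)\<^sup>*"
  shows "(x, y) \<in> A\<^sup>* \<or> (y, x) \<in> A\<^sup>*"
  using assms(3)
proof (induction rule: rtrancl_induct)
  case base
  show ?case by simp
next
  case (step y z)
  from step.hyps(2) consider "(y, z) \<in> A" | "(y, z) \<in> A\<inverse>" by blast
  then show ?case
  proof cases
    case 1
    have "(x, z) \<in> A\<^sup>*" if "(x, y) \<in> A\<^sup>*"
      using that 1 by (rule rtrancl.rtrancl_into_rtrancl)
    moreover have "(x, z) \<in> A\<^sup>* \<or> (z, x) \<in> A\<^sup>*" if "(y, x) \<in> A\<^sup>*"
      using single_valued_confluent[OF assms(1) that] 1 by blast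
    ultimately show ?thesis using step.IH by blast
  next
    case 2
    have "(z, x) \<in> A\<^sup>*" if "(y, x) \<in> A\<^sup>*"
      using 2 that by (auto intro: converse_rtrancl_into_rtrancl)
    moreover have "(x, z) \<in> A\<^sup>* \<or> (z, x) \<in> A\<^sup>*" if "(x, y) \<in> A\<^sup>*"
    proof -
      have "(y, x) \<in> (A\<inverse>)\<^sup>*" "(y, z) \<in> (A\<inverse>)\<^sup>*"
        using that 2 by (auto simp: rtrancl_converse)
      then show ?thesis
        using single_valued_confluent[OF assms(2)] by (auto simp: rtrancl_converse)
    qed
    ultimately show ?thesis using step.IH by blast
  qed
qed

lemma rtrancl_increasing_imp_le:
  fixes A :: "('a::order \<times> 'a) set"
  assumes "\<And>i j. (i, j) \<in> A \<Longrightarrow> i < j" "(x, y) \<in> A\<^sup>*"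
  shows "x \<le> y"
  using assms(2) by induction (auto dest: assms(1))

lemma equiv_rtrancl_symcl_restrict: "equiv X ((A \<union> A\<inverse>)\<^sup>* \<inter> X \<times> X)"
proof (rule equivI)
  have "sym ((A \<union> A\<inverse>)\<^sup>*)"
    by (rule sym_rtrancl) (auto simp: sym_def)
  then show "sym ((A \<union> A\<inverse>)\<^sup>* \<inter> X \<times> X)"
    unfolding sym_def by blast
  show "trans ((A \<union> A\<inverse>)\<^sup>* \<inter> X \<times> X)"
    by (auto intro!: transI intro: rtrancl_trans)
qed (auto simp: refl_on_def)

lemma set_partition_partition_of_arcs: "set_partition X (partition_of_arcs X A)"
  unfolding partition_of_arcs_def
  by (rule set_partition_quotient[OF equiv_rtrancl_symcl_restrict])

lemma Arc_partition_of_arcs: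
  assumes AX: "A \<subseteq> X \<times> X" and increasing: "\<And>i j. (i, j) \<in> A \<Longrightarrow> i < j"
    and sv: "single_valued A" "single_valued (A\<inverse>)"
  shows "Arc (partition_of_arcs X A) = A"
proof -
  define r where "r = (A \<union> A\<inverse>)\<^sup>* \<inter> X \<times> X"
  have equiv: "equiv X r"
    unfolding r_def by (rule equiv_rtrancl_symcl_restrict)
  have quotient: "partition_of_arcs X A = X // r"
    using AX unfolding partition_of_arcs_def r_def by (simp add: Int_absorb2)
  have A_r: "(i, j) \<in> r" if "(i, j) \<in> A" for i j
    using AX that unfolding r_def by blast
  have first_step: "\<exists>z. (i, z) \<in> A \<and> (z, m) \<in> A\<^sup>*" if "(i, m) \<in> r" "i < m" for i m
  proof -
    have "(i, m) \<in> A\<^sup>* \<or> (m, i) \<in> A\<^sup>*"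
      using rtrancl_symcl_imp_rtrancl_either[OF sv] that(1) unfolding r_def by blast
    then have "(i, m) \<in> A\<^sup>*"
      using rtrancl_increasing_imp_le[OF increasing, where x=m and y=i] that(2) by fastforce
    then show ?thesis
      using that(2) by (auto elim: converse_rtranclE)
  qed
  show ?thesis
    unfolding quotient
  proof (intro set_eqI iffI)
    fix p assume "p \<in> Arc (X // r)"
    then obtain i j B where p: "p = (i, j)" and B: "B \<in> X // r" "i \<in> B" "j \<in> B" "i < j"
      and least: "\<forall>m\<in>B. i < m \<longrightarrow> j \<le> m"
      unfolding Arc_def by blast
    have "(i, j) \<in> r"
      using in_quotient_imp_in_rel[OF equiv B(1)] B(2,3) by blast
    then obtain z where z: "(i, z) \<in> A" "(z, j) \<in> A\<^sup>*"
      using first_step B(4) by blast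
    have "z \<in> B"
      using in_quotient_imp_closed[OF equiv B(1,2) A_r[OF z(1)]] .
    then have "j \<le> z"
      using least increasing[OF z(1)] by blast
    moreover have "z \<le> j"
      using rtrancl_increasing_imp_le[OF increasing z(2)] .
    ultimately show "p \<in> A"
      using z(1) p by simp
  next
    fix p assume "p \<in> A"
    then obtain i j where p: "p = (i, j)" "(i, j) \<in> A" by (cases p) auto
    have "i \<in> X" using AX p(2) by blast
    then have "r``{i} \<in> X // r" "i \<in> r``{i}"
      using equiv_class_self[OF equiv] by (auto intro: quotientI)
    moreover have "j \<in> r``{i}"
      using A_r[OF p(2)] by blast
    moreover have "j \<le> m" if m: "m \<in> r``{i}" "i < m" for m
    proof -
      obtain z where "(i, z) \<in> A" "(z, m) \<in> A\<^sup>*"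
        using first_step[of i m] m by blast
      then show ?thesis
        using single_valuedD[OF sv(1) _ p(2)] rtrancl_increasing_imp_le[OF increasing] by blast
    qed
    ultimately show "p \<in> Arc (X // r)"
      unfolding Arc_def p using increasing[OF p(2)] by blast
  qed
qed

lemma Splus_iff: "(i, j) \<in> Splus \<longleftrightarrow> j = i + 1"
  unfolding Splus_def by auto

lemma Tplus_eq:
  assumes "finite X" "set_partition X L"
  shows "Tplus X L = {(i, i + 1) | i. i \<in> X \<and> i + 1 \<in> X \<and>
                        i \<notin> Domain (Arc L) \<and> i + 1 \<notin> Range (Arc L)}"
  unfolding Tplus_def block_maximum_iff_notin_Domain_Arc[OF assms]
    block_minimum_iff_notin_Range_Arc[OF assms]
  by blast

lemma Arc_plus_op:
  assumes "finite X" "set_partition X L"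
  shows "Arc (plus_op X L) = (Arc L - Splus) \<union> Tplus X L"
  unfolding plus_op_def
proof (rule Arc_partition_of_arcs)
  show "(Arc L - Splus) \<union> Tplus X L \<subseteq> X \<times> X"
    using Arc_subset[OF assms(2)] unfolding Tplus_eq[OF assms] by auto
  show "i < j" if "(i, j) \<in> (Arc L - Splus) \<union> Tplus X L" for i j
    using that Arc_less unfolding Tplus_eq[OF assms] by auto
  show "single_valued ((Arc L - Splus) \<union> Tplus X L)"
    using single_valuedD[OF single_valued_Arc[OF assms(2)]]
    unfolding single_valued_def Tplus_eq[OF assms] by blast
  show "single_valued (((Arc L - Splus) \<union> Tplus X L)\<inverse>)"
  proof (rule single_valuedI)
    fix x y z assume "(x, y) \<in> ((Arc L - Splus) \<union> Tplus X L)\<inverse>"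
      "(x, z) \<in> ((Arc L - Splus) \<union> Tplus X L)\<inverse>"
    then have "(y, x) \<in> (Arc L - Splus) \<union> Tplus X L" "(z, x) \<in> (Arc L - Splus) \<union> Tplus X L"
      by auto
    then show "y = z"
      using single_valuedD[OF single_valued_converse_Arc[OF assms(2)]]
      unfolding Tplus_eq[OF assms] by auto
  qed
qed

lemma Arc_plus_op_reflect:
  assumes "finite X" "set_partition X L" "\<And>x. x \<in> X \<Longrightarrow> - x \<in> X"
    and reflect: "\<And>i j. (i, j) \<in> Arc L \<Longrightarrow> (- j, - i) \<in> Arc L"
    and ij: "(i, j) \<in> Arc (plus_op X L)"
  shows "(- j, - i) \<in> Arc (plus_op X L)"
proof -
  from ij consider "(i, j) \<in> Arc L" "j \<noteq> i + 1"
    | "j = i + 1" "i \<in> X" "i + 1 \<in> X" "i \<notin> Domain (Arc L)" "i + 1 \<notin> Range (Arc L)"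
    unfolding Arc_plus_op[OF assms(1,2)] Tplus_eq[OF assms(1,2)] by (auto simp: Splus_iff)
  then show ?thesis
  proof cases
    case 1
    then show ?thesis
      using reflect unfolding Arc_plus_op[OF assms(1,2)] by (auto simp: Splus_iff)
  next
    case 2
    have "- (i + 1) \<notin> Domain (Arc L)"
      using 2(5) reflect by (metis Domain.cases Range.intros minus_minus)
    moreover have "- i \<notin> Range (Arc L)"
      using 2(4) reflect by (metis Range.cases Domain.intros minus_minus)
    moreover have "- (i + 1) \<in> X" "- (i + 1) + 1 \<in> X"
      using assms(3)[OF 2(3)] assms(3)[OF 2(2)] by simp_all
    ultimately show ?thesis
      unfolding Arc_plus_op[OF assms(1,2)] Tplus_eq[OF assms(1,2)] 2(1) by force
  qed
qed

lemma Arc_plus_op_crossing: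
  assumes "finite X" "set_partition X L"
    and "(i, k) \<in> Arc (plus_op X L)" "(j, l) \<in> Arc (plus_op X L)" "i < j" "j < k" "k < l"
  shows "(i, k) \<in> Arc L" "(j, l) \<in> Arc L"
  using assms(3-) unfolding Arc_plus_op[OF assms(1,2)] Tplus_def by auto

lemma NCB_adjacent_arc:
  assumes "L \<in> NCB n" "(i, j) \<in> Arc L" "(h, i + 1) \<in> Arc L"
  shows "j = i + 1"
proof (rule ccontr)
  assume "j \<noteq> i + 1"
  have "set_partition ({0} \<union> pm n) L"
    using assms(1) unfolding NCB_def PiB_def by blast
  then have "h \<noteq> i"
    using single_valuedD[OF single_valued_Arc] assms(2,3) \<open>j \<noteq> i + 1\<close> by blast
  then have "h < i" "i < i + 1" "i + 1 < j"
    using Arc_less[OF assms(2)] Arc_less[OF assms(3)] \<open>j \<noteq> i + 1\<close> by auto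
  then have "(h, i + 1) = (- j, - i)"
    using assms(1-3) unfolding NCB_def by blast
  then have "i + 1 = - i" by simp
  then show False by presburger
qed

lemma card_Arc_plus_op_interval:
  fixes a b :: int
  assumes partition: "set_partition {a..b} L"
    and adjacent: "\<And>h i j. (i, j) \<in> Arc L \<Longrightarrow> (h, i + 1) \<in> Arc L \<Longrightarrow> j = i + 1"
  shows "card (Arc (plus_op {a..b} L)) + card (Arc L) = nat (b - a)"
proof -
  define D where "D = Domain (Arc L)"
  define R where "R = (\<lambda>j. j - 1) ` Range (Arc L)"
  define step where "step = (\<lambda>i::int. (i, i + 1))"
  have inj_step: "inj_on step S" for S
    unfolding step_def by (rule inj_onI) simp
  have D_sub: "D \<subseteq> {a..<b}" and R_sub: "R \<subseteq> {a..<b}"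
    using Arc_subset[OF partition] Arc_less unfolding D_def R_def by fastforce+
  then have fin: "finite D" "finite R"
    by (auto intro: finite_subset)
  have card_D: "card D = card (Arc L)"
    unfolding D_def by (rule card_Domain_Arc[OF partition])
  have card_R: "card R = card (Arc L)"
    unfolding R_def using card_Range_Arc[OF partition]
    by (simp add: card_image inj_on_def)
  have Tplus: "Tplus {a..b} L = step ` ({a..<b} - (D \<union> R))"
    unfolding Tplus_eq[OF finite_atLeastAtMost_int partition] D_def R_def step_def
    by (auto simp: image_iff) (force+)
  have adjacent_arcs: "Arc L \<inter> Splus = step ` (D \<inter> R)"
  proof (intro set_eqI iffI)
    fix p assume "p \<in> Arc L \<inter> Splus"
    then obtain i where "p = step i" "(i, i + 1) \<in> Arc L"
      unfolding step_def Splus_def by blast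
    moreover have "i \<in> D" "i + 1 \<in> Range (Arc L)"
      using \<open>(i, i + 1) \<in> Arc L\<close> unfolding D_def by auto
    then have "i \<in> D \<inter> R"
      unfolding R_def by (auto intro: image_eqI[of _ _ "i + 1"])
    ultimately show "p \<in> step ` (D \<inter> R)" by blast
  next
    fix p assume "p \<in> step ` (D \<inter> R)"
    then obtain i j h where "p = step i" "(i, j) \<in> Arc L" "(h, i + 1) \<in> Arc L"
      unfolding D_def R_def by auto
    then show "p \<in> Arc L \<inter> Splus"
      using adjacent unfolding step_def Splus_def by auto
  qed
  have "finite (Arc L)"
    using Arc_subset[OF partition] finite_subset by blast
  then have "card (Arc L - Splus) = card (Arc L) - card (D \<inter> R)"
    using card_Diff_subset_Int[of "Arc L" Splus] adjacent_arcs card_image[OF inj_step] fin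
    by simp
  moreover have "card (Tplus {a..b} L) = nat (b - a) - card (D \<union> R)"
    unfolding Tplus card_image[OF inj_step] using D_sub R_sub by (simp add: card_Diff_subset fin)
  moreover have "card (Arc (plus_op {a..b} L)) = card (Arc L - Splus) + card (Tplus {a..b} L)"
    unfolding Arc_plus_op[OF finite_atLeastAtMost_int partition]
    using \<open>finite (Arc L)\<close> Tplus by (intro card_Un_disjoint) (auto simp: step_def Splus_def)
  moreover have "card (D \<union> R) + card (D \<inter> R) = card D + card R"
    using card_Un_Int[OF fin] by simp
  moreover have "card (D \<inter> R) \<le> card (Arc L)"
    using card_D card_mono[OF fin(1)] by (metis Int_lower1)
  moreover have "card (D \<union> R) \<le> nat (b - a)"
    using card_mono[of "{a..<b}" "D \<union> R"] D_sub R_sub by simp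
  ultimately show ?thesis
    using card_D card_R by linarith
qed

theorem proposition5p1:
  fixes n k :: nat and L :: "int set set"
  assumes "L \<in> NCB n" and "card L = 2 * k + 1"
  shows "plus_op ({0} \<union> pm n) L \<in> NCB n \<and>
         card (plus_op ({0} \<union> pm n) L) = 2 * (n - k) + 1"
proof -
  define X where "X = {0} \<union> pm n"
  have X: "X = {- int n..int n}"
    unfolding X_def pm_def by auto
  have "finite X" "card X = 2 * n + 1"
    unfolding X by auto
  have partition: "set_partition X L" and reflect: "\<And>i j. (i, j) \<in> Arc L \<Longrightarrow> (- j, - i) \<in> Arc L"
    using assms(1) unfolding NCB_def PiB_def X_def by blast+
  have partition_plus: "set_partition X (plus_op X L)"
    unfolding plus_op_def by (rule set_partition_partition_of_arcs)
  have "(i, j) \<in> Arc (plus_op X L) \<longleftrightarrow> (- j, - i) \<in> Arc (plus_op X L)" for i j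
    using Arc_plus_op_reflect[OF \<open>finite X\<close> partition _ reflect] unfolding X
    by (metis atLeastAtMost_iff minus_le_iff neg_le_iff_le minus_minus)
  moreover have "(a, c) = (- d, - b)"
    if "(a, c) \<in> Arc (plus_op X L)" "(b, d) \<in> Arc (plus_op X L)" "a < b" "b < c" "c < d" for a b c d
    using Arc_plus_op_crossing[OF \<open>finite X\<close> partition that] assms(1) that(3-5)
    unfolding NCB_def by blast
  ultimately have "plus_op X L \<in> NCB n"
    using partition_plus unfolding NCB_def PiB_def X_def by blast
  moreover have "card (Arc (plus_op X L)) + card (Arc L) = 2 * n"
    using card_Arc_plus_op_interval[of "- int n" "int n" L] partition NCB_adjacent_arc[OF assms(1)]
    unfolding X by simp
  then have "card (plus_op X L) = 2 * (n - k) + 1"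
    using card_partition_plus_card_Arc[OF \<open>finite X\<close> partition]
      card_partition_plus_card_Arc[OF \<open>finite X\<close> partition_plus]
      \<open>card X = 2 * n + 1\<close> assms(2) by linarith
  ultimately show ?thesis
    unfolding X_def by blast
qed

end
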